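(* Let $\mathcal{N}=(N,M_0)$ be a two-level PT-net system (transitions partitioned into low-level $L$ and high-level $H$) with the property BNDC, and let $M_1$ and $M_2$ be reachable markings of $\mathcal{N}\setminus H$ and $\mathcal{N}$, respectively. If $M_1\,R\,M_2$, then $\mathcal{L}(N\setminus H,M_1)=\mathcal{L}(N\setminus H,M_2)$.
   Context: A PT-net is $N=(P,T,F)$ with $P,T$ finite disjoint and $F:(P\times T)\cup(T\times P)\to\mathbb{N}$; markings $M:P\to\mathbb{N}$; $t$ enabled at $M$ ($M[t\rangle$) iff $M(p)\ge F(p,t)$ for all $p$, firing gives $M'(p)=M(p)+F(t,p)-F(p,t)$ ($M[t\rangle M'$); extended to sequences. $N\setminus H$ deletes the transitions of $H$. $\mathcal{L}(N\setminus H,M)$ is the set of all sequences $s\in L^*$ with $M[s\rangle$ in $N\setminus H$. For systems with disjoint place sets, $\mathcal{N}_1|\mathcal{N}_2$ has the union of places, the union of transitions (shared transitions synchronize, arcs inherited from each component on its own places), and union of initial markings. A high-level net system has only high-level transitions. Transitions in $L$ are observable, those in $H$ unobservable; weak bisimilarity $\approx$ is the existence of a relation between reachable markings containing the initial pair such that, for related $(M,M')$ and symmetrically, an observable step $M[l\rangle$ is matched by unobservable steps, $l$, unobservable steps leading to a related pair, and an unobservable step is matched by unobservable steps leading to a related pair. BNDC: for every high-level net system $\mathcal{N}'$ (places disjoint from those of $\mathcal{N}$) with transition set $H'$ disjoint from $L$, $\mathcal{N}\setminus H\approx(\mathcal{N}|\mathcal{N}')\setminus(H\setminus H')$. The relation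 $R$: $M\,R\,M'$ iff there exist $w\in L^*$ and $w'\in(L\cup H)^*$ with $M_0[w\rangle M$, $M_0[w'\rangle M'$, and $w$ the projection of $w'$ onto $L^*$. *)

theory Defs
  imports Main
begin

text \<open>PT-nets. Places of type 'p, transitions of type 't.
  The flow function F is split into pre (F(p,t)) and post (F(t,p)).\<close>

record ('p, 't) ptnet =
  places :: "'p set"
  trans  :: "'t set"
  pre    :: "'p \<Rightarrow> 't \<Rightarrow> nat"
  post   :: "'t \<Rightarrow> 'p \<Rightarrow> nat"

type_synonym 'p marking = "'p \<Rightarrow> nat"

definition wf_net :: "('p, 't) ptnet \<Rightarrow> bool" where
  "wf_net N \<longleftrightarrow> finite (places N) \<and> finite (trans N) \<and>
     (\<forall>p t. (p \<notin> places N \<or> t \<notin> trans N) \<longrightarrow> pre N p t = 0 \<and> post N t p = 0)"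

definition is_marking :: "('p, 't) ptnet \<Rightarrow> 'p marking \<Rightarrow> bool" where
  "is_marking N M \<longleftrightarrow> (\<forall>p. p \<notin> places N \<longrightarrow> M p = 0)"

definition enabled :: "('p, 't) ptnet \<Rightarrow> 'p marking \<Rightarrow> 't \<Rightarrow> bool" where
  "enabled N M t \<longleftrightarrow> t \<in> trans N \<and> (\<forall>p. pre N p t \<le> M p)"

definition fire :: "('p, 't) ptnet \<Rightarrow> 'p marking \<Rightarrow> 't \<Rightarrow> 'p marking" where
  "fire N M t = (\<lambda>p. M p + post N t p - pre N p t)"

definition step :: "('p, 't) ptnet \<Rightarrow> 'p marking \<Rightarrow> 't \<Rightarrow> 'p marking \<Rightarrow> bool" where
  "step N M t M' \<longleftrightarrow> enabled N M t \<and> M' = fire N M t"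

fun run :: "('p, 't) ptnet \<Rightarrow> 'p marking \<Rightarrow> 't list \<Rightarrow> 'p marking option" where
  "run N M [] = Some M"
| "run N M (t # s) = (if enabled N M t then run N (fire N M t) s else None)"

definition reach :: "('p, 't) ptnet \<Rightarrow> 'p marking \<Rightarrow> 'p marking set" where
  "reach N M0 = {M. \<exists>s. run N M0 s = Some M}"

definition del :: "('p, 't) ptnet \<Rightarrow> 't set \<Rightarrow> ('p, 't) ptnet" where
  "del N H = N\<lparr>trans := trans N - H\<rparr>"

definition lang :: "('p, 't) ptnet \<Rightarrow> 't set \<Rightarrow> 'p marking \<Rightarrow> 't list set" where
  "lang N L M = {s. set s \<subseteq> L \<and> run N M s \<noteq> None}"

text \<open>Parallel composition of nets with disjoint place sets (disjointness via the sum type);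
  shared transitions synchronise.\<close>
definition compose :: "('p, 't) ptnet \<Rightarrow> ('q, 't) ptnet \<Rightarrow> ('p + 'q, 't) ptnet" where
  "compose N1 N2 = \<lparr> places = Inl ` places N1 \<union> Inr ` places N2,
                     trans = trans N1 \<union> trans N2,
                     pre = (\<lambda>x t. case x of Inl p \<Rightarrow> pre N1 p t | Inr q \<Rightarrow> pre N2 q t),
                     post = (\<lambda>t x. case x of Inl p \<Rightarrow> post N1 t p | Inr q \<Rightarrow> post N2 t q) \<rparr>"

definition compose_marking :: "'p marking \<Rightarrow> 'q marking \<Rightarrow> ('p + 'q) marking" where
  "compose_marking M1 M2 = (\<lambda>x. case x of Inl p \<Rightarrow> M1 p | Inr q \<Rightarrow> M2 q)"

definition tau_steps :: "('p, 't) ptnet \<Rightarrow> 't set \<Rightarrow> 'p marking \<Rightarrow> 'p marking \<Rightarrow> bool" where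
  "tau_steps N L M M' \<longleftrightarrow> (\<exists>s. set s \<inter> L = {} \<and> run N M s = Some M')"

definition weak_bisim ::
  "('p, 't) ptnet \<Rightarrow> 'p marking \<Rightarrow> ('q, 't) ptnet \<Rightarrow> 'q marking \<Rightarrow> 't set \<Rightarrow> bool" where
  "weak_bisim N1 M01 N2 M02 L \<longleftrightarrow>
    (\<exists>R. (M01, M02) \<in> R \<and> R \<subseteq> reach N1 M01 \<times> reach N2 M02 \<and>
      (\<forall>(M, M') \<in> R.
         (\<forall>l Ma. l \<in> L \<and> step N1 M l Ma \<longrightarrow>
            (\<exists>Ma' Mb' Mc'. tau_steps N2 L M' Ma' \<and> step N2 Ma' l Mb' \<and>
                tau_steps N2 L Mb' Mc' \<and> (Ma, Mc') \<in> R)) \<and>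
         (\<forall>t Ma. t \<notin> L \<and> step N1 M t Ma \<longrightarrow>
            (\<exists>Mc'. tau_steps N2 L M' Mc' \<and> (Ma, Mc') \<in> R)) \<and>
         (\<forall>l Ma'. l \<in> L \<and> step N2 M' l Ma' \<longrightarrow>
            (\<exists>Ma Mb Mc. tau_steps N1 L M Ma \<and> step N1 Ma l Mb \<and>
                tau_steps N1 L Mb Mc \<and> (Mc, Ma') \<in> R)) \<and>
         (\<forall>t Ma'. t \<notin> L \<and> step N2 M' t Ma' \<longrightarrow>
            (\<exists>Mc. tau_steps N1 L M Mc \<and> (Mc, Ma') \<in> R))))"

definition two_level :: "('p, 't) ptnet \<Rightarrow> 'p marking \<Rightarrow> 't set \<Rightarrow> 't set \<Rightarrow> bool" where
  "two_level N M0 L H \<longleftrightarrow> wf_net N \<and> is_marking N M0 \<and> trans N = L \<union> H \<and> L \<inter> H = {}"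

text \<open>The places of the attacker net N' are taken from nat (every finite place set
  is isomorphic to a subset of nat); disjointness from the places of N is ensured by the
  sum type in the composition. N' is high-level: its transitions H' are disjoint from L.\<close>
definition BNDC :: "('p, 't) ptnet \<Rightarrow> 'p marking \<Rightarrow> 't set \<Rightarrow> 't set \<Rightarrow> bool" where
  "BNDC N M0 L H \<longleftrightarrow>
    (\<forall>(N' :: (nat, 't) ptnet) M0'. wf_net N' \<and> is_marking N' M0' \<and> trans N' \<inter> L = {} \<longrightarrow>
       weak_bisim (del N H) M0
                  (del (compose N N') (H - trans N')) (compose_marking M0 M0') L)"

definition relR :: "('p, 't) ptnet \<Rightarrow> 'p marking \<Rightarrow> 't set \<Rightarrow> 't set \<Rightarrow>
                    'p marking \<Rightarrow> 'p marking \<Rightarrow> bool" where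
  "relR N M0 L H M M' \<longleftrightarrow>
    (\<exists>w w'. set w \<subseteq> L \<and> set w' \<subseteq> L \<union> H \<and>
       run N M0 w = Some M \<and> run N M0 w' = Some M' \<and> w = filter (\<lambda>t. t \<in> L) w')"

end

theory Submission
  imports Defs
begin

text \<open>Let \<open>w'\<close> be the run of \<open>N\<close> reaching \<open>M\<^sub>2\<close> and \<open>w\<close> its low-level projection reaching \<open>M\<^sub>1\<close>.
  Attack \<open>N\<close> with a net holding one place with as many tokens as \<open>w'\<close> has high-level
  transitions, each of which consumes one of them. The composed system can replay \<open>w'\<close> and
  ends in \<open>M\<^sub>2\<close> with the budget exhausted. Since \<open>N \ H\<close> has no unobservable moves, BNDC
  forces the weak bisimulation to relate \<open>M\<^sub>1\<close> with this exhausted state; from there on the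
  composed system has no unobservable moves either and behaves on \<open>L\<close> exactly as \<open>N \ H\<close>
  at \<open>M\<^sub>2\<close>, so the bisimulation becomes a strong one between \<open>M\<^sub>1\<close> and \<open>M\<^sub>2\<close>.\<close>

lemma enabled_del: "enabled (del N H) M t \<longleftrightarrow> t \<notin> H \<and> enabled N M t"
  by (auto simp: enabled_def del_def)

lemma fire_del: "fire (del N H) = fire N"
  by (intro ext) (simp add: fire_def del_def)

lemma del_empty: "del N {} = N"
  by (simp add: del_def)

lemma run_del: "set s \<inter> H = {} \<Longrightarrow> run (del N H) M s = run N M s"
  by (induction s arbitrary: M) (auto simp: enabled_del fire_del)

lemma tau_steps_trivial:
  assumes "trans N \<subseteq> L" and "tau_steps N L M M'"
  shows "M' = M"
proof -
  obtain s where s: "set s \<inter> L = {}" "run N M s = Some M'"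
    using assms(2) unfolding tau_steps_def by blast
  show ?thesis
  proof (cases s)
    case Nil
    then show ?thesis using s by simp
  next
    case (Cons t u)
    then show ?thesis using s assms(1) by (auto simp: enabled_def split: if_splits)
  qed
qed

definition weak_bisim_rel ::
  "('p, 't) ptnet \<Rightarrow> ('q, 't) ptnet \<Rightarrow> 't set \<Rightarrow> ('p marking \<times> 'q marking) set \<Rightarrow> bool" where
  "weak_bisim_rel N1 N2 L R \<longleftrightarrow>
    (\<forall>(M, M') \<in> R.
       (\<forall>l Ma. l \<in> L \<and> step N1 M l Ma \<longrightarrow>
          (\<exists>Ma' Mb' Mc'. tau_steps N2 L M' Ma' \<and> step N2 Ma' l Mb' \<and>
              tau_steps N2 L Mb' Mc' \<and> (Ma, Mc') \<in> R)) \<and>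
       (\<forall>t Ma. t \<notin> L \<and> step N1 M t Ma \<longrightarrow>
          (\<exists>Mc'. tau_steps N2 L M' Mc' \<and> (Ma, Mc') \<in> R)) \<and>
       (\<forall>l Ma'. l \<in> L \<and> step N2 M' l Ma' \<longrightarrow>
          (\<exists>Ma Mb Mc. tau_steps N1 L M Ma \<and> step N1 Ma l Mb \<and>
              tau_steps N1 L Mb Mc \<and> (Mc, Ma') \<in> R)) \<and>
       (\<forall>t Ma'. t \<notin> L \<and> step N2 M' t Ma' \<longrightarrow>
          (\<exists>Mc. tau_steps N1 L M Mc \<and> (Mc, Ma') \<in> R)))"

lemma weak_bisimE:
  assumes "weak_bisim N1 M01 N2 M02 L"
  obtains R where "(M01, M02) \<in> R" and "weak_bisim_rel N1 N2 L R"
  using assms unfolding weak_bisim_def weak_bisim_rel_def by blast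

lemma weak_bisim_rel_obs_left:
  assumes "weak_bisim_rel N1 N2 L R" "(M, M') \<in> R" "l \<in> L" "step N1 M l Ma"
  obtains Ma' Mb' Mc' where "tau_steps N2 L M' Ma'" "step N2 Ma' l Mb'"
    "tau_steps N2 L Mb' Mc'" "(Ma, Mc') \<in> R"
  using assms unfolding weak_bisim_rel_def by blast

lemma weak_bisim_rel_obs_right:
  assumes "weak_bisim_rel N1 N2 L R" "(M, M') \<in> R" "l \<in> L" "step N2 M' l Ma'"
  obtains Ma Mb Mc where "tau_steps N1 L M Ma" "step N1 Ma l Mb"
    "tau_steps N1 L Mb Mc" "(Mc, Ma') \<in> R"
  using assms unfolding weak_bisim_rel_def by blast

lemma weak_bisim_rel_tau_right:
  assumes "weak_bisim_rel N1 N2 L R" "(M, M') \<in> R" "t \<notin> L" "step N2 M' t Ma'"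
  obtains Mc where "tau_steps N1 L M Mc" "(Mc, Ma') \<in> R"
  using assms unfolding weak_bisim_rel_def by blast

lemma weak_bisim_rel_run_right:
  assumes bisim: "weak_bisim_rel N1 N2 L R" and obs: "trans N1 \<subseteq> L"
  shows "(M, M') \<in> R \<Longrightarrow> run N2 M' u = Some M'' \<Longrightarrow>
    \<exists>Ma. run N1 M (filter (\<lambda>t. t \<in> L) u) = Some Ma \<and> (Ma, M'') \<in> R"
proof (induction u arbitrary: M M')
  case Nil
  then show ?case by simp
next
  case (Cons t u)
  then have step: "step N2 M' t (fire N2 M' t)" and rest: "run N2 (fire N2 M' t) u = Some M''"
    by (auto simp: step_def split: if_splits)
  have tau1: "tau_steps N1 L X Y \<Longrightarrow> Y = X" for X Y
    using tau_steps_trivial obs by blast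
  show ?case
  proof (cases "t \<in> L")
    case True
    obtain Ma Mb Mc where "tau_steps N1 L M Ma" "step N1 Ma t Mb" "tau_steps N1 L Mb Mc"
      "(Mc, fire N2 M' t) \<in> R"
      using weak_bisim_rel_obs_right[OF bisim Cons.prems(1) True step] .
    then have "step N1 M t Mb" "(Mb, fire N2 M' t) \<in> R"
      using tau1 by blast+
    then show ?thesis using Cons.IH rest True by (auto simp: step_def)
  next
    case False
    obtain Mc where "tau_steps N1 L M Mc" "(Mc, fire N2 M' t) \<in> R"
      using weak_bisim_rel_tau_right[OF bisim Cons.prems(1) False step] .
    then have "(M, fire N2 M' t) \<in> R"
      using tau1 by blast
    then show ?thesis using Cons.IH rest False by simp
  qed
qed

text \<open>On the image of \<open>\<phi>\<close> the right net mirrors the left one and has no unobservable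
  moves, so there the weak bisimulation is in effect a strong one.\<close>

lemma weak_bisim_rel_lang_eq:
  assumes bisim: "weak_bisim_rel N1 N2 L R" and obs: "trans N1 \<subseteq> L"
    and tau2: "\<And>M X. tau_steps N2 L (\<phi> M) X \<Longrightarrow> X = \<phi> M"
    and enabled2: "\<And>M l. l \<in> L \<Longrightarrow> enabled N2 (\<phi> M) l \<longleftrightarrow> enabled N1 M l"
    and fire2: "\<And>M l. l \<in> L \<Longrightarrow> fire N2 (\<phi> M) l = \<phi> (fire N1 M l)"
    and related: "(M, \<phi> M') \<in> R"
  shows "lang N1 L M = lang N1 L M'"
proof -
  have tau1: "tau_steps N1 L X Y \<Longrightarrow> Y = X" for X Y
    using tau_steps_trivial obs by blast
  have step2: "step N2 (\<phi> M') l X \<longleftrightarrow> enabled N1 M' l \<and> X = \<phi> (fire N1 M' l)"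
    if "l \<in> L" for M' l X
    using that enabled2 fire2 by (auto simp: step_def)
  have "set s \<subseteq> L \<Longrightarrow> (M, \<phi> M') \<in> R \<Longrightarrow> run N1 M s \<noteq> None \<longleftrightarrow> run N1 M' s \<noteq> None" for s
  proof (induction s arbitrary: M M')
    case Nil
    then show ?case by simp
  next
    case (Cons l s)
    then have l: "l \<in> L" by simp
    consider "enabled N1 M l" | "enabled N1 M' l"
      | "\<not> enabled N1 M l" "\<not> enabled N1 M' l" by blast
    then show ?case
    proof cases
      case 1
      then have "step N1 M l (fire N1 M l)" by (simp add: step_def)
      then obtain Ma' Mb' Mc' where "tau_steps N2 L (\<phi> M') Ma'" "step N2 Ma' l Mb'"
        "tau_steps N2 L Mb' Mc'" "(fire N1 M l, Mc') \<in> R"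
        using weak_bisim_rel_obs_left[OF bisim Cons.prems(2) l] by blast
      then have "enabled N1 M' l" "(fire N1 M l, \<phi> (fire N1 M' l)) \<in> R"
        using tau2 step2[OF l] by metis+
      then show ?thesis using 1 Cons.IH Cons.prems(1) by simp
    next
      case 2
      then have "step N2 (\<phi> M') l (\<phi> (fire N1 M' l))"
        using step2[OF l] by simp
      then obtain Ma Mb Mc where "tau_steps N1 L M Ma" "step N1 Ma l Mb" "tau_steps N1 L Mb Mc"
        "(Mc, \<phi> (fire N1 M' l)) \<in> R"
        using weak_bisim_rel_obs_right[OF bisim Cons.prems(2) l] by blast
      then have "enabled N1 M l" "(fire N1 M l, \<phi> (fire N1 M' l)) \<in> R"
        using tau1 by (auto simp: step_def)
      then show ?thesis using 2 Cons.IH Cons.prems(1) by simp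
    next
      case 3
      then show ?thesis by simp
    qed
  qed
  then show ?thesis
    using related unfolding lang_def by blast
qed

definition budget_net :: "'t set \<Rightarrow> (nat, 't) ptnet" where
  "budget_net H = \<lparr>places = {0}, trans = H,
     pre = (\<lambda>p t. if p = 0 \<and> t \<in> H then 1 else 0), post = (\<lambda>t p. 0)\<rparr>"

definition budget :: "nat \<Rightarrow> nat marking" where
  "budget k = (\<lambda>n. if n = 0 then k else 0)"

lemma wf_net_budget_net: "finite H \<Longrightarrow> wf_net (budget_net H)"
  by (auto simp: wf_net_def budget_net_def)

lemma is_marking_budget: "is_marking (budget_net H) (budget k)"
  by (simp add: is_marking_def budget_net_def budget_def)

lemma enabled_compose_budget:
  "enabled (compose N (budget_net H)) (compose_marking M (budget k)) t \<longleftrightarrow>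
    t \<in> trans N \<union> H \<and> (\<forall>p. pre N p t \<le> M p) \<and> (t \<in> H \<longrightarrow> 0 < k)"
  by (auto simp: enabled_def compose_def compose_marking_def budget_net_def budget_def
      split_sum_all)

lemma fire_compose_budget:
  "fire (compose N (budget_net H)) (compose_marking M (budget k)) t =
    compose_marking (fire N M t) (budget (if t \<in> H then k - 1 else k))"
  by (auto simp: fire_def compose_def compose_marking_def budget_net_def budget_def
      split: sum.split)

lemma enabled_compose_budget_low:
  "t \<notin> H \<Longrightarrow> enabled (compose N (budget_net H)) (compose_marking M (budget k)) t \<longleftrightarrow>
    enabled (del N H) M t"
  unfolding enabled_compose_budget enabled_del by (auto simp: enabled_def)

lemma run_compose_budget:
  "run N M u = Some M' \<Longrightarrow> length (filter (\<lambda>t. t \<in> H) u) \<le> k \<Longrightarrow>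
    run (compose N (budget_net H)) (compose_marking M (budget k)) u =
      Some (compose_marking M' (budget (k - length (filter (\<lambda>t. t \<in> H) u))))"
proof (induction u arbitrary: M k)
  case Nil
  then show ?case by simp
next
  case (Cons t u)
  then have en: "enabled N M t" and rest: "run N (fire N M t) u = Some M'"
    by (auto split: if_splits)
  have "enabled (compose N (budget_net H)) (compose_marking M (budget k)) t"
    using en Cons.prems(2) unfolding enabled_compose_budget by (auto simp: enabled_def)
  then show ?case
    using Cons.IH[OF rest, of "if t \<in> H then k - 1 else k"] Cons.prems(2)
    by (auto simp: fire_compose_budget)
qed

lemma tau_steps_compose_budget_exhausted:
  assumes "trans N \<subseteq> L \<union> H"
    and "tau_steps (compose N (budget_net H)) L (compose_marking M (budget 0)) X"
  shows "X = compose_marking M (budget 0)"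
proof -
  obtain s where s: "set s \<inter> L = {}"
    "run (compose N (budget_net H)) (compose_marking M (budget 0)) s = Some X"
    using assms(2) unfolding tau_steps_def by blast
  show ?thesis
  proof (cases s)
    case Nil
    then show ?thesis using s by simp
  next
    case (Cons t u)
    then show ?thesis
      using s assms(1) by (auto simp: enabled_compose_budget split: if_splits)
  qed
qed

lemma BNDC_budget_attack:
  assumes "two_level N M0 L H" and "BNDC N M0 L H"
  shows "weak_bisim (del N H) M0 (compose N (budget_net H)) (compose_marking M0 (budget k)) L"
proof -
  have "wf_net (budget_net H)" "trans (budget_net H) \<inter> L = {}"
    using assms(1) wf_net_budget_net by (auto simp: two_level_def wf_net_def budget_net_def)
  then have "weak_bisim (del N H) M0 (del (compose N (budget_net H)) (H - trans (budget_net H)))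
      (compose_marking M0 (budget k)) L"
    using assms(2)[unfolded BNDC_def, rule_format, of "budget_net H" "budget k"]
      is_marking_budget by blast
  then show ?thesis
    by (simp add: budget_net_def del_empty)
qed

lemma budget_exhausted_lang_eq:
  assumes bisim: "weak_bisim_rel (del N H) (compose N (budget_net H)) L R"
    and net: "trans N = L \<union> H" "L \<inter> H = {}"
    and related: "(M1, compose_marking M2 (budget 0)) \<in> R"
  shows "lang (del N H) L M1 = lang (del N H) L M2"
proof -
  have obs: "trans (del N H) \<subseteq> L"
    using net by (auto simp: del_def)
  have low: "l \<notin> H" if "l \<in> L" for l
    using net(2) that by blast
  show ?thesis
  proof (rule weak_bisim_rel_lang_eq[where \<phi> = "\<lambda>M. compose_marking M (budget 0)",
        OF bisim obs])
    show "X = compose_marking M (budget 0)"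
      if "tau_steps (compose N (budget_net H)) L (compose_marking M (budget 0)) X" for M X
      using tau_steps_compose_budget_exhausted[of N L H] net(1) that by simp
    show "enabled (compose N (budget_net H)) (compose_marking M (budget 0)) l \<longleftrightarrow>
        enabled (del N H) M l" if "l \<in> L" for M l
      using low[OF that] by (simp add: enabled_compose_budget_low)
    show "fire (compose N (budget_net H)) (compose_marking M (budget 0)) l =
        compose_marking (fire (del N H) M l) (budget 0)" if "l \<in> L" for M l
      using low[OF that] by (simp add: fire_compose_budget fire_del)
  qed (use related in simp)
qed

theorem lemma2:
  fixes N :: "('p, 't) ptnet" and M0 M1 M2 :: "'p marking" and L H :: "'t set"
  assumes "two_level N M0 L H"
    and "BNDC N M0 L H"
    and "M1 \<in> reach (del N H) M0"
    and "M2 \<in> reach N M0"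
    and "relR N M0 L H M1 M2"
  shows "lang (del N H) L M1 = lang (del N H) L M2"
  \<comment> \<open>The reachability hypotheses are implied by \<open>relR\<close> and not needed.\<close>
proof -
  have net: "trans N = L \<union> H" "L \<inter> H = {}"
    using assms(1) unfolding two_level_def by auto
  obtain w w' where w: "set w \<subseteq> L" "run N M0 w = Some M1"
    and w': "run N M0 w' = Some M2" "w = filter (\<lambda>t. t \<in> L) w'"
    using assms(5) unfolding relR_def by blast
  define k where "k = length (filter (\<lambda>t. t \<in> H) w')"
  obtain R where R0: "(M0, compose_marking M0 (budget k)) \<in> R"
    and bisim: "weak_bisim_rel (del N H) (compose N (budget_net H)) L R"
    using BNDC_budget_attack[OF assms(1,2)] by (rule weak_bisimE)
  have obs: "trans (del N H) \<subseteq> L"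
    using net by (auto simp: del_def)
  have "run (compose N (budget_net H)) (compose_marking M0 (budget k)) w' =
      Some (compose_marking M2 (budget 0))"
    using run_compose_budget[OF w'(1) order.refl] unfolding k_def by simp
  then obtain Ma where "run (del N H) M0 w = Some Ma" "(Ma, compose_marking M2 (budget 0)) \<in> R"
    using weak_bisim_rel_run_right[OF bisim obs R0] unfolding w'(2) by blast
  moreover have "run (del N H) M0 w = Some M1"
    using w net(2) run_del[of w H N M0] by auto
  ultimately show ?thesis
    using budget_exhausted_lang_eq[OF bisim net] by simp
qed

end
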